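(* Let $\mathcal{A}=\{0,1\}$, contexts $X$ with density $p(x)$, real outcome $Y$ with density $p(y\mid x,a)$, and behaviour policy $\pi^b(a\mid x)>0$ for all $a,x$; let $p_\pi(x,a,y)=p(y\mid x,a)\pi(a\mid x)p(x)$ with $Y$-marginal $p_\pi(y)$, and $\pi^{(a)}(a'\mid x)=\mathbb{1}(a'=a)$. Define $\rho_{\mathrm{ATE}}(a,x)=\frac{\mathbb{1}(a=1)-\mathbb{1}(a=0)}{\pi^b(a\mid x)}$ and $w_{\mathrm{ATE}}(y)=\frac{p_{\pi^{(1)}}(y)-p_{\pi^{(0)}}(y)}{p_{\pi^b}(y)}$, and for i.i.d. $(x_i,a_i,y_i)_{i=1}^n$ from $p_{\pi^b}$ let $\widehat{\mathrm{ATE}}_{\mathrm{IPW}}=\frac1n\sum_i\rho_{\mathrm{ATE}}(a_i,x_i)y_i$ and $\widehat{\mathrm{ATE}}_{\mathrm{MR}}=\frac1n\sum_iw_{\mathrm{ATE}}(y_i)y_i$ (exact weights). Then $\mathbb{V}[\widehat{\mathrm{ATE}}_{\mathrm{MR}}]\le\mathbb{V}[\widehat{\mathrm{ATE}}_{\mathrm{IPW}}]$; specifically $$\mathbb{V}[\widehat{\mathrm{ATE}}_{\mathrm{IPW}}]-\mathbb{V}[\widehat{\mathrm{ATE}}_{\mathrm{MR}}]=\frac1n\mathbb{E}\big[\mathbb{V}[\rho_{\mathrm{ATE}}(A,X)\mid Y]\,Y^2\big]\ge0.$$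
   Context: All expectations and variances are under $p_{\pi^b}$. *)

theory Defs
  imports "HOL-Probability.Probability"
begin

text \<open>Actions A = {0,1} are encoded as bool (True = 1, False = 0).
  Samples are triples (x, a, y) :: 'x \<times> bool \<times> real.
  px: context density w.r.t. a sigma-finite measure on contexts;
  py x a y: outcome density p(y|x,a) w.r.t. Lebesgue measure;
  a policy pol a x = pi(a|x).\<close>

definition joint_dens ::
  "('x \<Rightarrow> real) \<Rightarrow> ('x \<Rightarrow> bool \<Rightarrow> real \<Rightarrow> real) \<Rightarrow> (bool \<Rightarrow> 'x \<Rightarrow> real) \<Rightarrow> 'x \<times> bool \<times> real \<Rightarrow> real"
  where "joint_dens px py pol = (\<lambda>(x, a, y). py x a y * pol a x * px x)"

definition sample_measure ::
  "'x measure \<Rightarrow> ('x \<Rightarrow> real) \<Rightarrow> ('x \<Rightarrow> bool \<Rightarrow> real \<Rightarrow> real) \<Rightarrow> (bool \<Rightarrow> 'x \<Rightarrow> real) \<Rightarrow> ('x \<times> bool \<times> real) measure"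
  where "sample_measure MX px py pol =
    density (MX \<Otimes>\<^sub>M (count_space UNIV \<Otimes>\<^sub>M lborel)) (\<lambda>\<omega>. ennreal (joint_dens px py pol \<omega>))"

definition Y_marg ::
  "'x measure \<Rightarrow> ('x \<Rightarrow> real) \<Rightarrow> ('x \<Rightarrow> bool \<Rightarrow> real \<Rightarrow> real) \<Rightarrow> (bool \<Rightarrow> 'x \<Rightarrow> real) \<Rightarrow> real \<Rightarrow> real"
  where "Y_marg MX px py pol y = (\<integral>x. (\<Sum>a\<in>UNIV. py x a y * pol a x) * px x \<partial>MX)"

definition det_policy :: "bool \<Rightarrow> bool \<Rightarrow> 'x \<Rightarrow> real"
  where "det_policy a = (\<lambda>a' x. if a' = a then 1 else 0)"

definition rho_ATE :: "(bool \<Rightarrow> 'x \<Rightarrow> real) \<Rightarrow> bool \<Rightarrow> 'x \<Rightarrow> real"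
  where "rho_ATE pib a x = ((if a then 1 else 0) - (if \<not> a then 1 else 0)) / pib a x"

definition w_ATE ::
  "'x measure \<Rightarrow> ('x \<Rightarrow> real) \<Rightarrow> ('x \<Rightarrow> bool \<Rightarrow> real \<Rightarrow> real) \<Rightarrow> (bool \<Rightarrow> 'x \<Rightarrow> real) \<Rightarrow> real \<Rightarrow> real"
  where "w_ATE MX px py pib y =
    (Y_marg MX px py (det_policy True) y - Y_marg MX px py (det_policy False) y) / Y_marg MX px py pib y"

definition ATE_IPW :: "nat \<Rightarrow> (bool \<Rightarrow> 'x \<Rightarrow> real) \<Rightarrow> (nat \<Rightarrow> 'x \<times> bool \<times> real) \<Rightarrow> real"
  where "ATE_IPW n pib s = (1 / real n) * (\<Sum>i<n. rho_ATE pib (fst (snd (s i))) (fst (s i)) * snd (snd (s i)))"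

definition ATE_MR ::
  "nat \<Rightarrow> 'x measure \<Rightarrow> ('x \<Rightarrow> real) \<Rightarrow> ('x \<Rightarrow> bool \<Rightarrow> real \<Rightarrow> real) \<Rightarrow> (bool \<Rightarrow> 'x \<Rightarrow> real) \<Rightarrow> (nat \<Rightarrow> 'x \<times> bool \<times> real) \<Rightarrow> real"
  where "ATE_MR n MX px py pib s = (1 / real n) * (\<Sum>i<n. w_ATE MX px py pib (snd (snd (s i))) * snd (snd (s i)))"

definition sigma_Y :: "('x \<times> bool \<times> real) measure \<Rightarrow> ('x \<times> bool \<times> real) measure"
  where "sigma_Y M = vimage_algebra (space M) (\<lambda>\<omega>. snd (snd \<omega>)) borel"

definition cond_var :: "'a measure \<Rightarrow> 'a measure \<Rightarrow> ('a \<Rightarrow> real) \<Rightarrow> 'a \<Rightarrow> real"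
  where "cond_var M F f = real_cond_exp M F (\<lambda>\<omega>. (f \<omega> - real_cond_exp M F f \<omega>)\<^sup>2)"

end

theory Submission
  imports Defs
begin

text \<open>Both estimators are means of \<open>n\<close> i.i.d. terms, so their variances are \<open>1/n\<close> times the
  variances of \<open>\<rho>(A,X) Y\<close> and \<open>w(Y) Y\<close>. Integrating out the context gives, for every \<open>g \<ge> 0\<close>,
  \<open>E[1(A=a) g(Y) / \<pi>\<^sup>b(a|X)] = \<integral> g(y) p\<^sub>a(y) dy = E[g(Y) p\<^sub>a(Y) / p\<^sub>b(Y)]\<close>, where \<open>p\<^sub>a\<close> and \<open>p\<^sub>b\<close> are
  the outcome densities under the deterministic policy \<open>a\<close> and under \<open>\<pi>\<^sup>b\<close>; hence
  \<open>w(Y) = E[\<rho>(A,X) | Y]\<close>. As \<open>Y\<close> is \<open>\<sigma>(Y)\<close>-measurable, \<open>w(Y) Y = E[\<rho>(A,X) Y | Y]\<close>, so the two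
  terms have the same mean and their second moments differ by
  \<open>E[(\<rho>(A,X) - w(Y))\<^sup>2 Y\<^sup>2] = E[V[\<rho>(A,X) | Y] Y\<^sup>2] \<ge> 0\<close>.\<close>

context finite_measure_subalgebra
begin

lemma integrable_square_cond_exp_mult:
  fixes R Y :: "'a \<Rightarrow> real"
  assumes [measurable]: "R \<in> borel_measurable M" "Y \<in> borel_measurable F"
    and RY2: "integrable M (\<lambda>\<omega>. (R \<omega> * Y \<omega>)\<^sup>2)"
  shows "integrable M (\<lambda>\<omega>. (real_cond_exp M F R \<omega> * Y \<omega>)\<^sup>2)"
    and "(\<integral>\<omega>. real_cond_exp M F R \<omega> * Y \<omega> \<partial>M) = (\<integral>\<omega>. R \<omega> * Y \<omega> \<partial>M)"
proof -
  have [measurable]: "Y \<in> borel_measurable M" by (rule measurable_from_subalg[OF subalg]) simp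
  have RY: "integrable M (\<lambda>\<omega>. Y \<omega> * R \<omega>)"
    using square_integrable_imp_integrable[OF _ RY2] by (simp add: mult.commute)
  have pull_out: "AE \<omega> in M. real_cond_exp M F (\<lambda>\<omega>. Y \<omega> * R \<omega>) \<omega> = real_cond_exp M F R \<omega> * Y \<omega>"
    using real_cond_exp_mult[OF _ _ RY] by (simp add: mult.commute)
  have "integrable M (\<lambda>\<omega>. (real_cond_exp M F (\<lambda>\<omega>. Y \<omega> * R \<omega>) \<omega>)\<^sup>2)"
    by (rule integrable_convex_cond_exp[of _ UNIV _ _ power2])
       (use RY RY2 convex_power2 in \<open>auto simp: mult.commute\<close>)
  then show "integrable M (\<lambda>\<omega>. (real_cond_exp M F R \<omega> * Y \<omega>)\<^sup>2)"
    by (rule integrable_cong_AE_imp) (use pull_out in auto)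
  have "(\<integral>\<omega>. real_cond_exp M F R \<omega> * Y \<omega> \<partial>M) = (\<integral>\<omega>. real_cond_exp M F (\<lambda>\<omega>. Y \<omega> * R \<omega>) \<omega> \<partial>M)"
    by (rule integral_cong_AE) (use pull_out in auto)
  also have "\<dots> = (\<integral>\<omega>. R \<omega> * Y \<omega> \<partial>M)"
    using real_cond_exp_int(2)[OF RY] by (simp add: mult.commute)
  finally show "(\<integral>\<omega>. real_cond_exp M F R \<omega> * Y \<omega> \<partial>M) = (\<integral>\<omega>. R \<omega> * Y \<omega> \<partial>M)" .
qed

lemma integral_cond_var_mult_square:
  fixes R Y :: "'a \<Rightarrow> real"
  assumes [measurable]: "R \<in> borel_measurable M" "Y \<in> borel_measurable F"
    and RY2: "integrable M (\<lambda>\<omega>. (R \<omega> * Y \<omega>)\<^sup>2)"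
  shows "(\<integral>\<omega>. cond_var M F R \<omega> * (Y \<omega>)\<^sup>2 \<partial>M)
      = (\<integral>\<omega>. (R \<omega> * Y \<omega>)\<^sup>2 \<partial>M) - (\<integral>\<omega>. (real_cond_exp M F R \<omega> * Y \<omega>)\<^sup>2 \<partial>M)"
    and "(\<integral>\<omega>. cond_var M F R \<omega> * (Y \<omega>)\<^sup>2 \<partial>M) \<ge> 0"
proof -
  have [measurable]: "Y \<in> borel_measurable M" by (rule measurable_from_subalg[OF subalg]) simp
  define c where "c = real_cond_exp M F R"
  have [measurable]: "c \<in> borel_measurable F" "c \<in> borel_measurable M" unfolding c_def by simp_all
  have cY2: "integrable M (\<lambda>\<omega>. (c \<omega> * Y \<omega>)\<^sup>2)"
    unfolding c_def by (rule integrable_square_cond_exp_mult(1)[OF _ _ RY2]) simp_all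
  have cross: "integrable M (\<lambda>\<omega>. (c \<omega> * (Y \<omega>)\<^sup>2) * R \<omega>)"
  proof (rule Bochner_Integration.integrable_bound)
    show "integrable M (\<lambda>\<omega>. (R \<omega> * Y \<omega>)\<^sup>2 + (c \<omega> * Y \<omega>)\<^sup>2)" using RY2 cY2 by simp
    have abs_mult_le: "\<bar>a * b\<bar> \<le> a\<^sup>2 + b\<^sup>2" for a b :: real
      using sum_squares_bound[of "\<bar>a\<bar>" "\<bar>b\<bar>"] abs_ge_zero[of "a * b"] abs_mult[of a b] by simp
    show "AE \<omega> in M. norm ((c \<omega> * (Y \<omega>)\<^sup>2) * R \<omega>) \<le> norm ((R \<omega> * Y \<omega>)\<^sup>2 + (c \<omega> * Y \<omega>)\<^sup>2)"
    proof (rule AE_I2)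
      fix \<omega>
      show "norm ((c \<omega> * (Y \<omega>)\<^sup>2) * R \<omega>) \<le> norm ((R \<omega> * Y \<omega>)\<^sup>2 + (c \<omega> * Y \<omega>)\<^sup>2)"
        using abs_mult_le[of "R \<omega> * Y \<omega>" "c \<omega> * Y \<omega>"] by (simp add: power2_eq_square mult_ac)
    qed
  qed simp
  have cond_var_eq: "cond_var M F R = real_cond_exp M F (\<lambda>\<omega>. (R \<omega> - c \<omega>)\<^sup>2)"
    unfolding cond_var_def c_def ..
  have expand: "(Y \<omega>)\<^sup>2 * (R \<omega> - c \<omega>)\<^sup>2
      = (R \<omega> * Y \<omega>)\<^sup>2 - 2 * ((c \<omega> * (Y \<omega>)\<^sup>2) * R \<omega>) + (c \<omega> * Y \<omega>)\<^sup>2" for \<omega>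
    by (simp add: power2_eq_square algebra_simps)
  have reduce: "(\<integral>\<omega>. cond_var M F R \<omega> * (Y \<omega>)\<^sup>2 \<partial>M) = (\<integral>\<omega>. (Y \<omega>)\<^sup>2 * (R \<omega> - c \<omega>)\<^sup>2 \<partial>M)"
    unfolding cond_var_eq
    using real_cond_exp_intg(2)[of "\<lambda>\<omega>. (Y \<omega>)\<^sup>2" "\<lambda>\<omega>. (R \<omega> - c \<omega>)\<^sup>2"] RY2 cY2 cross
    by (simp add: mult.commute expand)
  also have "\<dots> = (\<integral>\<omega>. (R \<omega> * Y \<omega>)\<^sup>2 \<partial>M) - 2 * (\<integral>\<omega>. (c \<omega> * (Y \<omega>)\<^sup>2) * R \<omega> \<partial>M)
      + (\<integral>\<omega>. (c \<omega> * Y \<omega>)\<^sup>2 \<partial>M)"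
    unfolding expand using RY2 cY2 cross by simp
  also have "(\<integral>\<omega>. (c \<omega> * (Y \<omega>)\<^sup>2) * R \<omega> \<partial>M) = (\<integral>\<omega>. (c \<omega> * Y \<omega>)\<^sup>2 \<partial>M)"
    \<comment> \<open>\<open>c Y\<^sup>2\<close> is F-measurable, so R may be replaced by its conditional expectation \<open>c\<close>\<close>
    using real_cond_exp_intg(2)[OF cross] unfolding c_def[symmetric]
    by (simp add: power2_eq_square mult_ac)
  finally show "(\<integral>\<omega>. cond_var M F R \<omega> * (Y \<omega>)\<^sup>2 \<partial>M)
      = (\<integral>\<omega>. (R \<omega> * Y \<omega>)\<^sup>2 \<partial>M) - (\<integral>\<omega>. (real_cond_exp M F R \<omega> * Y \<omega>)\<^sup>2 \<partial>M)"
    by (simp add: c_def)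
  show "(\<integral>\<omega>. cond_var M F R \<omega> * (Y \<omega>)\<^sup>2 \<partial>M) \<ge> 0"
    unfolding reduce by simp
qed

end

lemma (in prob_space) variance_reduction_cond_exp:
  fixes R Y W :: "'a \<Rightarrow> real"
  assumes F: "subalgebra M F"
    and [measurable]: "R \<in> borel_measurable M" "Y \<in> borel_measurable F" "W \<in> borel_measurable M"
    and RY2: "integrable M (\<lambda>\<omega>. (R \<omega> * Y \<omega>)\<^sup>2)"
    and W: "AE \<omega> in M. real_cond_exp M F R \<omega> = W \<omega>"
  shows "integrable M (\<lambda>\<omega>. (W \<omega> * Y \<omega>)\<^sup>2)"
    and "variance (\<lambda>\<omega>. R \<omega> * Y \<omega>) - variance (\<lambda>\<omega>. W \<omega> * Y \<omega>)
      = expectation (\<lambda>\<omega>. cond_var M F R \<omega> * (Y \<omega>)\<^sup>2)"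
    and "expectation (\<lambda>\<omega>. cond_var M F R \<omega> * (Y \<omega>)\<^sup>2) \<ge> 0"
proof -
  interpret finite_measure_subalgebra M F by unfold_locales (rule F)
  have [measurable]: "Y \<in> borel_measurable M" by (rule measurable_from_subalg[OF subalg]) simp
  note cond_exp = integrable_square_cond_exp_mult[OF _ _ RY2]
  have same: "AE \<omega> in M. real_cond_exp M F R \<omega> * Y \<omega> = W \<omega> * Y \<omega>" using W by auto
  show WY2: "integrable M (\<lambda>\<omega>. (W \<omega> * Y \<omega>)\<^sup>2)"
    by (rule integrable_cong_AE_imp[OF cond_exp(1)]) (use same in auto)
  have squares: "expectation (\<lambda>\<omega>. (W \<omega> * Y \<omega>)\<^sup>2) = expectation (\<lambda>\<omega>. (real_cond_exp M F R \<omega> * Y \<omega>)\<^sup>2)"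
    by (rule integral_cong_AE) (use same in auto)
  have means: "expectation (\<lambda>\<omega>. W \<omega> * Y \<omega>) = expectation (\<lambda>\<omega>. R \<omega> * Y \<omega>)"
    using cond_exp(2) integral_cong_AE[of _ M _ , OF _ _ same] by simp
  have RY: "integrable M (\<lambda>\<omega>. R \<omega> * Y \<omega>)" and WY: "integrable M (\<lambda>\<omega>. W \<omega> * Y \<omega>)"
    using square_integrable_imp_integrable[OF _ RY2] square_integrable_imp_integrable[OF _ WY2] by simp_all
  show "variance (\<lambda>\<omega>. R \<omega> * Y \<omega>) - variance (\<lambda>\<omega>. W \<omega> * Y \<omega>)
      = expectation (\<lambda>\<omega>. cond_var M F R \<omega> * (Y \<omega>)\<^sup>2)"
    by (simp only: variance_eq[OF RY RY2] variance_eq[OF WY WY2])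
       (simp add: means squares integral_cond_var_mult_square(1)[OF _ _ RY2])
  show "expectation (\<lambda>\<omega>. cond_var M F R \<omega> * (Y \<omega>)\<^sup>2) \<ge> 0"
    by (rule integral_cond_var_mult_square(2)[OF _ _ RY2]) simp_all
qed

lemma integral_PiM_component:
  fixes g :: "'a \<Rightarrow> real"
  assumes M: "prob_space M" and i: "i \<in> I" and g: "g \<in> borel_measurable M"
  shows "(\<integral>\<omega>. g (\<omega> i) \<partial>PiM I (\<lambda>_. M)) = integral\<^sup>L M g"
    and "integrable M g \<Longrightarrow> integrable (PiM I (\<lambda>_. M)) (\<lambda>\<omega>. g (\<omega> i))"
proof -
  have distr: "distr (PiM I (\<lambda>_. M)) M (\<lambda>\<omega>. \<omega> i) = M"
    using distr_PiM_component[of I "\<lambda>_. M" i] M i by auto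
  have component: "(\<lambda>\<omega>. \<omega> i) \<in> measurable (PiM I (\<lambda>_. M)) M" using i by measurable
  show "(\<integral>\<omega>. g (\<omega> i) \<partial>PiM I (\<lambda>_. M)) = integral\<^sup>L M g"
    using integral_distr[OF component g] distr by simp
  show "integrable (PiM I (\<lambda>_. M)) (\<lambda>\<omega>. g (\<omega> i))" if "integrable M g"
    using integrable_distr_eq[OF component g] distr that by simp
qed

lemma integral_PiM_components_mult:
  fixes g :: "'a \<Rightarrow> real"
  assumes M: "prob_space M" and I: "finite I" "i \<in> I" "j \<in> I"
    and g: "integrable M g" "integrable M (\<lambda>x. (g x)\<^sup>2)"
  shows "integrable (PiM I (\<lambda>_. M)) (\<lambda>\<omega>. g (\<omega> i) * g (\<omega> j))" (is ?integrable)
    and "(\<integral>\<omega>. g (\<omega> i) * g (\<omega> j) \<partial>PiM I (\<lambda>_. M))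
      = (if i = j then (\<integral>x. (g x)\<^sup>2 \<partial>M) else (\<integral>x. g x \<partial>M)\<^sup>2)" (is ?integral)
proof (atomize (full), cases "i = j")
  case True
  have [measurable]: "g \<in> borel_measurable M" using g by auto
  show "?integrable \<and> ?integral"
    using integral_PiM_component[OF M I(2), of "\<lambda>x. (g x)\<^sup>2"] g True by (simp add: power2_eq_square)
next
  case False
  interpret M: prob_space M by (rule M)
  interpret product_prob_space "\<lambda>_. M" I ..
  define f where "f = (\<lambda>k x. if k = i \<or> k = j then g x else 1)"
  have ij: "I \<inter> {k. k = i \<or> k = j} = {i, j}" using I by auto
  have "(\<Prod>k\<in>I. f k (\<omega> k)) = g (\<omega> i) * g (\<omega> j)" for \<omega>
    using I False by (simp add: f_def prod.If_cases ij)
  moreover have "integral\<^sup>L M (f k) = (if k = i \<or> k = j then integral\<^sup>L M g else 1)" for k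
    by (simp add: f_def M.prob_space)
  then have "(\<Prod>k\<in>I. integral\<^sup>L M (f k)) = (\<integral>x. g x \<partial>M)\<^sup>2"
    using I False by (simp add: prod.If_cases ij power2_eq_square)
  moreover have "integrable M (f k)" for k using g by (cases "k = i \<or> k = j") (simp_all add: f_def)
  ultimately show "?integrable \<and> ?integral"
    using product_integrable_prod[OF I(1), of f] product_integral_prod[OF I(1), of f] False by simp
qed

lemma variance_sample_mean:
  fixes f :: "'a \<Rightarrow> real"
  assumes M: "prob_space M" and f[measurable]: "f \<in> borel_measurable M"
    and f2: "integrable M (\<lambda>x. (f x)\<^sup>2)"
  shows "prob_space.variance (PiM {..<n} (\<lambda>_. M)) (\<lambda>s. (1 / real n) * (\<Sum>i<n. f (s i)))
       = prob_space.variance M f / real n"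
proof (cases "n = 0")
  case True
  then show ?thesis by simp
next
  case False
  interpret M: prob_space M by (rule M)
  let ?P = "PiM {..<n} (\<lambda>_. M)"
  interpret P: prob_space ?P using M by (intro prob_space_PiM) auto
  have fi: "integrable M f" using M.square_integrable_imp_integrable[OF _ f2] by simp
  define g where "g = (\<lambda>x. f x - M.expectation f)"
  have [measurable]: "g \<in> borel_measurable M" unfolding g_def by simp
  have g: "integrable M g" "integrable M (\<lambda>x. (g x)\<^sup>2)"
    using fi f2 by (simp_all add: g_def power2_diff)
  have Eg: "M.expectation g = 0" using fi by (simp add: g_def M.prob_space)
  have Vf: "M.variance f = M.expectation (\<lambda>x. (g x)\<^sup>2)" by (simp only: g_def)
  have coordinates: "integrable ?P (\<lambda>s. f (s i))" "P.expectation (\<lambda>s. f (s i)) = M.expectation f"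
    if "i \<in> {..<n}" for i
    using integral_PiM_component[OF M that f] fi by simp_all
  have mean: "P.expectation (\<lambda>s. (1 / real n) * (\<Sum>i<n. f (s i))) = M.expectation f"
    using False coordinates by (simp add: Bochner_Integration.integral_sum)
  have centered: "(1 / real n) * (\<Sum>i<n. f (s i)) - M.expectation f = (1 / real n) * (\<Sum>i<n. g (s i))" for s
    using False by (simp add: g_def sum_subtractf right_diff_distrib)
  have products: "integrable ?P (\<lambda>s. g (s i) * g (s j))"
      "P.expectation (\<lambda>s. g (s i) * g (s j)) = (if i = j then M.variance f else 0)"
    if "i \<in> {..<n}" "j \<in> {..<n}" for i j
    using integral_PiM_components_mult[OF M finite_lessThan that g] by (simp_all add: Eg Vf)
  have "P.variance (\<lambda>s. (1 / real n) * (\<Sum>i<n. f (s i)))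
      = P.expectation (\<lambda>s. (1 / real n)\<^sup>2 * (\<Sum>i<n. \<Sum>j<n. g (s i) * g (s j)))"
    by (simp only: mean centered power_mult_distrib power2_eq_square[of "sum _ _"] sum_product)
  also have "\<dots> = (1 / real n)\<^sup>2 * (\<Sum>i<n. \<Sum>j<n. P.expectation (\<lambda>s. g (s i) * g (s j)))"
  proof -
    have "P.expectation (\<lambda>s. \<Sum>i<n. \<Sum>j<n. g (s i) * g (s j))
        = (\<Sum>i<n. P.expectation (\<lambda>s. \<Sum>j<n. g (s i) * g (s j)))"
      by (rule Bochner_Integration.integral_sum) (use products(1) in auto)
    also have "\<dots> = (\<Sum>i<n. \<Sum>j<n. P.expectation (\<lambda>s. g (s i) * g (s j)))"
      by (intro sum.cong refl Bochner_Integration.integral_sum) (use products(1) in auto)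
    finally show ?thesis by simp
  qed
  also have "\<dots> = M.variance f / real n"
    using False products(2) by (simp add: power2_eq_square)
  finally show ?thesis .
qed

lemma sets_sigma_Y: "sets (sigma_Y M) = {(\<lambda>\<omega>. snd (snd \<omega>)) -` B \<inter> space M | B. B \<in> sets borel}"
  unfolding sigma_Y_def by (rule sets_vimage_algebra2) simp

lemma measurable_sigma_Y[measurable]: "(\<lambda>\<omega>. snd (snd \<omega>)) \<in> borel_measurable (sigma_Y M)"
  unfolding sigma_Y_def by (rule measurable_vimage_algebra1) simp

lemma subalgebra_sigma_Y:
  assumes "(\<lambda>\<omega>. snd (snd \<omega>)) \<in> borel_measurable M"
  shows "subalgebra M (sigma_Y M)"
proof -
  have "space (sigma_Y M) = space M" by (simp add: sigma_Y_def)
  then show ?thesis using measurable_sets[OF assms] by (auto simp: subalgebra_def sets_sigma_Y)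
qed

locale binary_treatment_model = MX: sigma_finite_measure MX
  for MX :: "'x measure" +
  fixes px :: "'x \<Rightarrow> real" and py :: "'x \<Rightarrow> bool \<Rightarrow> real \<Rightarrow> real" and pib :: "bool \<Rightarrow> 'x \<Rightarrow> real"
  assumes px_meas[measurable]: "px \<in> borel_measurable MX"
    and px_nonneg: "\<forall>x\<in>space MX. px x \<ge> 0"
    and px_norm: "(\<integral>\<^sup>+ x. ennreal (px x) \<partial>MX) = 1"
    and py_meas: "(\<lambda>(x, a, y). py x a y) \<in> borel_measurable (MX \<Otimes>\<^sub>M (count_space UNIV \<Otimes>\<^sub>M lborel))"
    and py_nonneg: "\<forall>x\<in>space MX. \<forall>a y. py x a y \<ge> 0"
    and py_norm: "\<forall>x\<in>space MX. \<forall>a. (\<integral>\<^sup>+ y. ennreal (py x a y) \<partial>lborel) = 1"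
    and pib_meas: "\<forall>a. pib a \<in> borel_measurable MX"
    and pib_pos: "\<forall>x\<in>space MX. \<forall>a. pib a x > 0"
    and pib_sum: "\<forall>x\<in>space MX. pib True x + pib False x = 1"
begin

abbreviation SM :: "('x \<times> bool \<times> real) measure"
  where "SM \<equiv> sample_measure MX px py pib"

lemma pib_nonneg: "x \<in> space MX \<Longrightarrow> 0 \<le> pib a x"
  using pib_pos by (simp add: less_imp_le)

lemma pib_measurable[measurable]: "pib a \<in> borel_measurable MX"
  using pib_meas by simp

lemma py_measurable[measurable]:
  "(\<lambda>\<omega>. py (fst \<omega>) (fst (snd \<omega>)) (snd (snd \<omega>))) \<in> borel_measurable (MX \<Otimes>\<^sub>M (count_space UNIV \<Otimes>\<^sub>M lborel))"
  using py_meas by (simp add: case_prod_beta')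

lemma py_measurable_fixed_action[measurable]:
  "(\<lambda>\<omega>. py (fst \<omega>) a (snd \<omega>)) \<in> borel_measurable (MX \<Otimes>\<^sub>M lborel)"
proof -
  have "(\<lambda>\<omega>. (fst \<omega>, a, snd \<omega>)) \<in> measurable (MX \<Otimes>\<^sub>M lborel) (MX \<Otimes>\<^sub>M (count_space UNIV \<Otimes>\<^sub>M lborel))"
    by measurable
  from measurable_compose[OF this py_measurable] show ?thesis by simp
qed

lemma py_measurable_outcome[measurable]: "x \<in> space MX \<Longrightarrow> py x a \<in> borel_measurable lborel"
  using measurable_compose[OF measurable_Pair1' py_measurable_fixed_action] by simp

lemma py_measurable_context[measurable]: "(\<lambda>x. py x a y) \<in> borel_measurable MX"
  using measurable_compose[OF measurable_Pair2' py_measurable_fixed_action] by simp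

lemma py_measurable_swapped[measurable]: "(\<lambda>\<omega>. py (snd \<omega>) a (fst \<omega>)) \<in> borel_measurable (borel \<Otimes>\<^sub>M MX)"
proof -
  have "sets (lborel \<Otimes>\<^sub>M MX) = sets (borel \<Otimes>\<^sub>M MX)" by (intro sets_pair_measure_cong) simp_all
  with measurable_pair_swap[OF py_measurable_fixed_action] show ?thesis
    by (simp add: case_prod_beta' cong: measurable_cong_sets)
qed

lemma joint_dens_measurable[measurable]:
  "joint_dens px py pib \<in> borel_measurable (MX \<Otimes>\<^sub>M (count_space UNIV \<Otimes>\<^sub>M lborel))"
  unfolding joint_dens_def case_prod_beta' by measurable

lemma sets_SM[measurable_cong]: "sets SM = sets (MX \<Otimes>\<^sub>M (count_space UNIV \<Otimes>\<^sub>M lborel))"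
  by (simp add: sample_measure_def)

lemma nn_integral_sample_measure:
  assumes [measurable]: "h \<in> borel_measurable (MX \<Otimes>\<^sub>M (count_space UNIV \<Otimes>\<^sub>M lborel))"
  shows "(\<integral>\<^sup>+ \<omega>. h \<omega> \<partial>SM)
    = (\<integral>\<^sup>+ y. (\<Sum>a\<in>UNIV. \<integral>\<^sup>+ x. ennreal (py x a y * pib a x * px x) * h (x, a, y) \<partial>MX) \<partial>lborel)"
proof -
  interpret AY: pair_sigma_finite "count_space (UNIV :: bool set)" lborel
    by (intro pair_sigma_finite.intro sigma_finite_measure_count_space_finite lborel.sigma_finite_measure_axioms) simp
  interpret X_AY: pair_sigma_finite MX "count_space (UNIV :: bool set) \<Otimes>\<^sub>M lborel"
    by (intro pair_sigma_finite.intro MX.sigma_finite_measure_axioms sigma_finite_pair_measure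
        sigma_finite_measure_count_space_finite lborel.sigma_finite_measure_axioms) simp
  have "(\<integral>\<^sup>+ \<omega>. h \<omega> \<partial>SM)
      = (\<integral>\<^sup>+ \<omega>. ennreal (joint_dens px py pib \<omega>) * h \<omega> \<partial>(MX \<Otimes>\<^sub>M (count_space UNIV \<Otimes>\<^sub>M lborel)))"
    unfolding sample_measure_def by (rule nn_integral_density) auto
  also have "\<dots> = (\<integral>\<^sup>+ ay. (\<integral>\<^sup>+ x. ennreal (joint_dens px py pib (x, ay)) * h (x, ay) \<partial>MX) \<partial>(count_space UNIV \<Otimes>\<^sub>M lborel))"
    by (rule X_AY.nn_integral_snd[symmetric]) simp
  also have "\<dots> = (\<integral>\<^sup>+ y. (\<integral>\<^sup>+ a. (\<integral>\<^sup>+ x. ennreal (joint_dens px py pib (x, a, y)) * h (x, a, y) \<partial>MX) \<partial>count_space UNIV) \<partial>lborel)"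
    by (rule AY.nn_integral_snd[symmetric, simplified]) measurable
  also have "\<dots> = (\<integral>\<^sup>+ y. (\<Sum>a\<in>UNIV. \<integral>\<^sup>+ x. ennreal (py x a y * pib a x * px x) * h (x, a, y) \<partial>MX) \<partial>lborel)"
    by (simp add: nn_integral_count_space_finite joint_dens_def)
  finally show ?thesis .
qed

lemma nn_integral_outcome_density:
  assumes [measurable]: "c \<in> borel_measurable MX" and c_nonneg: "\<And>x. x \<in> space MX \<Longrightarrow> c x \<ge> 0"
  shows "(\<integral>\<^sup>+ y. (\<integral>\<^sup>+ x. ennreal (py x a y * c x) \<partial>MX) \<partial>lborel) = (\<integral>\<^sup>+ x. ennreal (c x) \<partial>MX)"
proof -
  interpret pair_sigma_finite MX lborel ..
  have "(\<integral>\<^sup>+ y. (\<integral>\<^sup>+ x. ennreal (py x a y * c x) \<partial>MX) \<partial>lborel)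
      = (\<integral>\<^sup>+ x. (\<integral>\<^sup>+ y. ennreal (py x a y) * ennreal (c x) \<partial>lborel) \<partial>MX)"
    using py_nonneg c_nonneg
    by (subst Fubini'[symmetric]) (auto simp: case_prod_beta' ennreal_mult intro!: nn_integral_cong)
  also have "\<dots> = (\<integral>\<^sup>+ x. ennreal (c x) \<partial>MX)"
  proof (rule nn_integral_cong)
    fix x assume x: "x \<in> space MX"
    then have "(\<lambda>y. ennreal (py x a y)) \<in> borel_measurable lborel" by measurable
    then show "(\<integral>\<^sup>+ y. ennreal (py x a y) * ennreal (c x) \<partial>lborel) = ennreal (c x)"
      using py_norm x by (simp add: nn_integral_multc)
  qed
  finally show ?thesis .
qed

definition Y_dens_det :: "bool \<Rightarrow> real \<Rightarrow> ennreal"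
  where "Y_dens_det a y = (\<integral>\<^sup>+ x. ennreal (py x a y * px x) \<partial>MX)"

definition Y_dens_b :: "real \<Rightarrow> ennreal"
  where "Y_dens_b y = (\<Sum>a\<in>UNIV. \<integral>\<^sup>+ x. ennreal (py x a y * pib a x * px x) \<partial>MX)"

lemma Y_dens_det_measurable[measurable]: "Y_dens_det a \<in> borel_measurable borel"
  unfolding Y_dens_det_def[abs_def] by measurable

lemma Y_dens_b_measurable[measurable]: "Y_dens_b \<in> borel_measurable borel"
  unfolding Y_dens_b_def[abs_def] by measurable

lemma nn_integral_Y_dens_det: "(\<integral>\<^sup>+ y. Y_dens_det a y \<partial>lborel) = 1"
  unfolding Y_dens_det_def using nn_integral_outcome_density[of px a] px_nonneg px_norm by simp

lemma nn_integral_Y_dens_b: "(\<integral>\<^sup>+ y. Y_dens_b y \<partial>lborel) = 1"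
proof -
  have "(\<integral>\<^sup>+ y. Y_dens_b y \<partial>lborel)
      = (\<Sum>a\<in>UNIV. \<integral>\<^sup>+ y. (\<integral>\<^sup>+ x. ennreal (py x a y * (pib a x * px x)) \<partial>MX) \<partial>lborel)"
    unfolding Y_dens_b_def by (subst nn_integral_sum) (simp_all add: mult.assoc)
  also have "\<dots> = (\<Sum>a\<in>UNIV. \<integral>\<^sup>+ x. ennreal (pib a x * px x) \<partial>MX)"
    using px_nonneg by (intro sum.cong refl nn_integral_outcome_density) (simp_all add: pib_nonneg)
  also have "\<dots> = (\<integral>\<^sup>+ x. (\<Sum>a\<in>UNIV. ennreal (pib a x * px x)) \<partial>MX)"
    by (rule nn_integral_sum[symmetric]) simp
  also have "\<dots> = (\<integral>\<^sup>+ x. ennreal (px x) \<partial>MX)"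
  proof (rule nn_integral_cong)
    fix x assume x: "x \<in> space MX"
    then have "ennreal (pib True x * px x) + ennreal (pib False x * px x) = ennreal (px x)"
      using pib_sum px_nonneg pib_nonneg
      by (simp flip: ennreal_plus add: distrib_right[symmetric])
    then show "(\<Sum>a\<in>UNIV. ennreal (pib a x * px x)) = ennreal (px x)" by (simp add: UNIV_bool add.commute)
  qed
  finally show ?thesis using px_norm by simp
qed

lemma prob_space_SM: "prob_space SM"
proof
  have "emeasure SM (space SM) = (\<integral>\<^sup>+ \<omega>. 1 \<partial>SM)" by simp
  also have "\<dots> = (\<integral>\<^sup>+ y. Y_dens_b y \<partial>lborel)"
    by (subst nn_integral_sample_measure) (simp_all add: Y_dens_b_def[abs_def])
  finally show "emeasure SM (space SM) = 1" using nn_integral_Y_dens_b by simp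
qed

lemma Y_marg_det_policy: "Y_marg MX px py (det_policy a) y = enn2real (Y_dens_det a y)"
proof -
  have "Y_marg MX px py (det_policy a) y = (\<integral>x. py x a y * px x \<partial>MX)"
    unfolding Y_marg_def det_policy_def by (cases a) (simp_all add: UNIV_bool)
  also have "\<dots> = enn2real (Y_dens_det a y)"
    unfolding Y_dens_det_def using py_nonneg px_nonneg
    by (intro integral_eq_nn_integral AE_I2) (simp_all, measurable)
  finally show ?thesis .
qed

lemma Y_marg_pib: "Y_marg MX px py pib y = enn2real (Y_dens_b y)"
proof -
  have "Y_marg MX px py pib y = enn2real (\<integral>\<^sup>+ x. ennreal ((\<Sum>a\<in>UNIV. py x a y * pib a x) * px x) \<partial>MX)"
    unfolding Y_marg_def using py_nonneg px_nonneg pib_nonneg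
    by (intro integral_eq_nn_integral AE_I2) (simp_all add: UNIV_bool, measurable)
  also have "(\<integral>\<^sup>+ x. ennreal ((\<Sum>a\<in>UNIV. py x a y * pib a x) * px x) \<partial>MX)
      = (\<integral>\<^sup>+ x. (\<Sum>a\<in>UNIV. ennreal (py x a y * pib a x * px x)) \<partial>MX)"
    using py_nonneg px_nonneg pib_nonneg
    by (intro nn_integral_cong) (simp add: UNIV_bool distrib_right)
  also have "\<dots> = Y_dens_b y"
    unfolding Y_dens_b_def by (rule nn_integral_sum) simp
  finally show ?thesis .
qed

lemma Y_dens_det_eq_0:
  assumes "Y_dens_b y = 0"
  shows "Y_dens_det a y = 0"
proof -
  have "(\<integral>\<^sup>+ x. ennreal (py x a y * pib a x * px x) \<partial>MX) = 0"
    using assms unfolding Y_dens_b_def by (cases a) (simp_all add: UNIV_bool)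
  moreover have "(\<lambda>x. ennreal (py x a y * pib a x * px x)) \<in> borel_measurable MX" by measurable
  ultimately have AE_zero: "AE x in MX. py x a y * pib a x * px x \<le> 0"
    by (simp add: nn_integral_0_iff_AE ennreal_eq_0_iff)
  moreover have pointwise: "py x a y * px x = 0" if "x \<in> space MX" "py x a y * pib a x * px x \<le> 0" for x
  proof -
    have "py x a y * px x = (py x a y * pib a x * px x) / pib a x"
      using pib_pos that(1) by (simp add: less_imp_neq[symmetric])
    also have "\<dots> \<le> 0" using pib_pos that by (intro divide_nonpos_pos) auto
    moreover have "0 \<le> py x a y * px x" using py_nonneg px_nonneg that(1) by simp
    ultimately show ?thesis by linarith
  qed
  have "AE x in MX. py x a y * px x = 0"
    using AE_zero AE_space by eventually_elim (use pointwise in auto)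
  then show ?thesis
    unfolding Y_dens_det_def by (simp add: nn_integral_0_iff_AE) (auto elim!: eventually_mono)
qed

definition ipw_weight :: "bool \<Rightarrow> 'x \<times> bool \<times> real \<Rightarrow> real"
  where "ipw_weight a \<omega> = (if fst (snd \<omega>) = a then 1 / pib a (fst \<omega>) else 0)"

definition dens_ratio :: "bool \<Rightarrow> real \<Rightarrow> real"
  where "dens_ratio a y = enn2real (Y_dens_det a y) / enn2real (Y_dens_b y)"

lemma ipw_weight_measurable[measurable]:
  "ipw_weight a \<in> borel_measurable (MX \<Otimes>\<^sub>M (count_space UNIV \<Otimes>\<^sub>M lborel))"
  unfolding ipw_weight_def[abs_def] by measurable

lemma dens_ratio_measurable[measurable]: "dens_ratio a \<in> borel_measurable borel"
  unfolding dens_ratio_def[abs_def] by measurable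

lemma dens_ratio_nonneg: "0 \<le> dens_ratio a y"
  by (simp add: dens_ratio_def)

lemma rho_ATE_eq_ipw_weight: "rho_ATE pib (fst (snd \<omega>)) (fst \<omega>) = ipw_weight True \<omega> - ipw_weight False \<omega>"
  by (cases "fst (snd \<omega>)") (simp_all add: rho_ATE_def ipw_weight_def)

lemma w_ATE_eq_dens_ratio: "w_ATE MX px py pib y = dens_ratio True y - dens_ratio False y"
  by (simp add: w_ATE_def Y_marg_det_policy Y_marg_pib dens_ratio_def diff_divide_distrib)

lemma nn_integral_ipw_weight:
  assumes [measurable]: "g \<in> borel_measurable borel"
  shows "(\<integral>\<^sup>+ \<omega>. g (snd (snd \<omega>)) * ennreal (ipw_weight a \<omega>) \<partial>SM) = (\<integral>\<^sup>+ y. g y * Y_dens_det a y \<partial>lborel)"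
proof -
  have pointwise: "ennreal (py x b y * pib b x * px x) * (c * ennreal (ipw_weight a (x, b, y)))
      = (if b = a then c * ennreal (py x a y * px x) else 0)" if "x \<in> space MX" for x b y c
  proof (cases "b = a")
    case True
    have "0 < pib a x" using pib_pos that by simp
    then have "ennreal (py x a y * pib a x * px x) * ennreal (1 / pib a x) = ennreal (py x a y * px x)"
      by (simp flip: ennreal_mult'')
    then show ?thesis using True by (simp add: ipw_weight_def mult_ac)
  qed (simp add: ipw_weight_def)
  have "(\<integral>\<^sup>+ \<omega>. g (snd (snd \<omega>)) * ennreal (ipw_weight a \<omega>) \<partial>SM)
      = (\<integral>\<^sup>+ y. (\<Sum>b\<in>UNIV. \<integral>\<^sup>+ x. ennreal (py x b y * pib b x * px x) * (g y * ennreal (ipw_weight a (x, b, y))) \<partial>MX) \<partial>lborel)"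
    using nn_integral_sample_measure[of "\<lambda>\<omega>. g (snd (snd \<omega>)) * ennreal (ipw_weight a \<omega>)"] by simp
  also have "\<dots> = (\<integral>\<^sup>+ y. (\<integral>\<^sup>+ x. g y * ennreal (py x a y * px x) \<partial>MX) \<partial>lborel)"
  proof -
    have "(\<integral>\<^sup>+ x. ennreal (py x b y * pib b x * px x) * (g y * ennreal (ipw_weight a (x, b, y))) \<partial>MX)
        = (if b = a then \<integral>\<^sup>+ x. g y * ennreal (py x a y * px x) \<partial>MX else 0)" for b y
      by (cases "b = a") (simp_all add: pointwise cong: nn_integral_cong)
    then show ?thesis by simp
  qed
  also have "\<dots> = (\<integral>\<^sup>+ y. g y * Y_dens_det a y \<partial>lborel)"
    unfolding Y_dens_det_def by (subst nn_integral_cmult) simp_all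
  finally show ?thesis .
qed

text \<open>Only almost everywhere: on a null set the densities may be infinite, where \<^const>\<open>enn2real\<close>
  returns the junk value 0.\<close>

lemma Y_dens_b_mult_dens_ratio: "AE y in lborel. Y_dens_b y * ennreal (dens_ratio a y) = Y_dens_det a y"
proof -
  have "AE y in lborel. Y_dens_det a y \<noteq> \<infinity>" "AE y in lborel. Y_dens_b y \<noteq> \<infinity>"
    by (rule nn_integral_PInf_AE, simp, simp add: nn_integral_Y_dens_det nn_integral_Y_dens_b)+
  then show ?thesis
  proof eventually_elim
    case (elim y)
    show ?case
    proof (cases "Y_dens_b y = 0")
      case True
      then show ?thesis by (simp add: Y_dens_det_eq_0)
    next
      case False
      with elim obtain q t where "Y_dens_b y = ennreal q" "q > 0" "Y_dens_det a y = ennreal t" "t \<ge> 0"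
        by (cases "Y_dens_b y"; cases "Y_dens_det a y") auto
      then show ?thesis by (simp add: dens_ratio_def flip: ennreal_mult)
    qed
  qed
qed

lemma nn_integral_dens_ratio:
  assumes [measurable]: "g \<in> borel_measurable borel"
  shows "(\<integral>\<^sup>+ \<omega>. g (snd (snd \<omega>)) * ennreal (dens_ratio a (snd (snd \<omega>))) \<partial>SM)
      = (\<integral>\<^sup>+ y. g y * Y_dens_det a y \<partial>lborel)"
proof -
  have "(\<integral>\<^sup>+ \<omega>. g (snd (snd \<omega>)) * ennreal (dens_ratio a (snd (snd \<omega>))) \<partial>SM)
      = (\<integral>\<^sup>+ y. Y_dens_b y * (g y * ennreal (dens_ratio a y)) \<partial>lborel)"
    using nn_integral_sample_measure[of "\<lambda>\<omega>. g (snd (snd \<omega>)) * ennreal (dens_ratio a (snd (snd \<omega>)))"]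
    by (simp add: Y_dens_b_def nn_integral_multc sum_distrib_right)
  also have "\<dots> = (\<integral>\<^sup>+ y. g y * Y_dens_det a y \<partial>lborel)"
  proof (rule nn_integral_cong_AE)
    show "AE y in lborel. Y_dens_b y * (g y * ennreal (dens_ratio a y)) = g y * Y_dens_det a y"
      using Y_dens_b_mult_dens_ratio[of a] by eventually_elim (metis mult.left_commute)
  qed
  finally show ?thesis .
qed

lemma integrable_indicator_Y_mult:
  assumes [measurable]: "f \<in> borel_measurable SM" "B \<in> sets borel"
    and f_nonneg: "\<And>\<omega>. \<omega> \<in> space SM \<Longrightarrow> 0 \<le> f \<omega>"
    and f_integral: "(\<integral>\<^sup>+ \<omega>. indicator B (snd (snd \<omega>)) * ennreal (f \<omega>) \<partial>SM)
      = (\<integral>\<^sup>+ y. indicator B y * Y_dens_det a y \<partial>lborel)"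
  shows "integrable SM (\<lambda>\<omega>. indicator B (snd (snd \<omega>)) * f \<omega>)"
    and "(\<integral>\<omega>. indicator B (snd (snd \<omega>)) * f \<omega> \<partial>SM) = enn2real (\<integral>\<^sup>+ y. indicator B y * Y_dens_det a y \<partial>lborel)"
proof -
  have nn_integral_eq: "(\<integral>\<^sup>+ \<omega>. ennreal (indicator B (snd (snd \<omega>)) * f \<omega>) \<partial>SM)
      = (\<integral>\<^sup>+ y. indicator B y * Y_dens_det a y \<partial>lborel)"
    unfolding f_integral[symmetric] by (intro nn_integral_cong) (simp split: split_indicator)
  have "(\<integral>\<^sup>+ y. indicator B y * Y_dens_det a y \<partial>lborel) \<le> (\<integral>\<^sup>+ y. Y_dens_det a y \<partial>lborel)"
    by (intro nn_integral_mono) (simp split: split_indicator)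
  then have finite: "(\<integral>\<^sup>+ y. indicator B y * Y_dens_det a y \<partial>lborel) < \<infinity>"
    using nn_integral_Y_dens_det by (simp add: order_le_less_trans)
  have nonneg: "AE \<omega> in SM. 0 \<le> indicator B (snd (snd \<omega>)) * f \<omega>"
    using f_nonneg by (intro AE_I2) simp
  show "integrable SM (\<lambda>\<omega>. indicator B (snd (snd \<omega>)) * f \<omega>)"
    using nonneg finite nn_integral_eq by (intro integrableI_nonneg) simp_all
  show "(\<integral>\<omega>. indicator B (snd (snd \<omega>)) * f \<omega> \<partial>SM) = enn2real (\<integral>\<^sup>+ y. indicator B y * Y_dens_det a y \<partial>lborel)"
    using integral_eq_nn_integral[OF _ nonneg] nn_integral_eq by simp
qed

lemma ipw_weight_nonneg: "\<omega> \<in> space SM \<Longrightarrow> 0 \<le> ipw_weight a \<omega>"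
  using pib_nonneg by (auto simp: ipw_weight_def sample_measure_def space_pair_measure)

lemma integrable_ipw_weight: "integrable SM (ipw_weight a)"
  using integrable_indicator_Y_mult(1)[OF _ _ ipw_weight_nonneg nn_integral_ipw_weight, where B=UNIV] by simp

lemma cond_exp_ipw_weight:
  "AE \<omega> in SM. real_cond_exp SM (sigma_Y SM) (ipw_weight a) \<omega> = dens_ratio a (snd (snd \<omega>))"
proof -
  interpret prob_space SM by (rule prob_space_SM)
  interpret finite_measure_subalgebra SM "sigma_Y SM"
    by unfold_locales (rule subalgebra_sigma_Y, measurable)
  note ipw = integrable_indicator_Y_mult[OF _ _ ipw_weight_nonneg nn_integral_ipw_weight]
  note ratio = integrable_indicator_Y_mult[OF _ _ dens_ratio_nonneg nn_integral_dens_ratio]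
  show ?thesis
  proof (rule real_cond_exp_charact)
    show "integrable SM (ipw_weight a)" by (rule integrable_ipw_weight)
    show "integrable SM (\<lambda>\<omega>. dens_ratio a (snd (snd \<omega>)))"
      using ratio(1)[where B=UNIV] by simp
    show "(\<lambda>\<omega>. dens_ratio a (snd (snd \<omega>))) \<in> borel_measurable (sigma_Y SM)" by measurable
    fix A assume "A \<in> sets (sigma_Y SM)"
    then obtain B where [measurable]: "B \<in> sets borel" and A: "A = (\<lambda>\<omega>. snd (snd \<omega>)) -` B \<inter> space SM"
      by (auto simp: sets_sigma_Y)
    have set_integral_A: "(\<integral>\<omega>\<in>A. h \<omega> \<partial>SM) = (\<integral>\<omega>. indicator B (snd (snd \<omega>)) * h \<omega> \<partial>SM)"
      for h :: "'x \<times> bool \<times> real \<Rightarrow> real"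
      unfolding set_lebesgue_integral_def A
      by (intro Bochner_Integration.integral_cong) (simp_all split: split_indicator)
    show "(\<integral>\<omega>\<in>A. ipw_weight a \<omega> \<partial>SM) = (\<integral>\<omega>\<in>A. dens_ratio a (snd (snd \<omega>)) \<partial>SM)"
      unfolding set_integral_A using ipw(2)[where B=B] ratio(2)[where B=B] by simp
  qed
qed

lemma rho_ATE_measurable: "(\<lambda>(x, a, y). rho_ATE pib a x) \<in> borel_measurable SM"
  unfolding case_prod_beta' rho_ATE_eq_ipw_weight by measurable

lemma w_ATE_measurable: "w_ATE MX px py pib \<in> borel_measurable borel"
  unfolding w_ATE_eq_dens_ratio[abs_def] by measurable

lemma cond_exp_rho_ATE:
  "AE \<omega> in SM. real_cond_exp SM (sigma_Y SM) (\<lambda>(x, a, y). rho_ATE pib a x) \<omega> = w_ATE MX px py pib (snd (snd \<omega>))"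
proof -
  interpret prob_space SM by (rule prob_space_SM)
  interpret finite_measure_subalgebra SM "sigma_Y SM"
    by unfold_locales (rule subalgebra_sigma_Y, measurable)
  have rho: "(\<lambda>(x, a, y). rho_ATE pib a x) = (\<lambda>\<omega>. ipw_weight True \<omega> - ipw_weight False \<omega>)"
    by (auto simp: rho_ATE_eq_ipw_weight[symmetric])
  show ?thesis
    unfolding rho
    using real_cond_exp_diff[OF integrable_ipw_weight[of True] integrable_ipw_weight[of False]]
      cond_exp_ipw_weight[of True] cond_exp_ipw_weight[of False]
    by eventually_elim (simp add: w_ATE_eq_dens_ratio)
qed

end

theorem propositionA5:
  fixes MX :: "'x measure" and px :: "'x \<Rightarrow> real"
    and py :: "'x \<Rightarrow> bool \<Rightarrow> real \<Rightarrow> real" and pib :: "bool \<Rightarrow> 'x \<Rightarrow> real" and n :: nat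
  assumes sf: "sigma_finite_measure MX"
    and px_meas: "px \<in> borel_measurable MX"
    and px_nonneg: "\<forall>x\<in>space MX. px x \<ge> 0"
    and px_norm: "(\<integral>\<^sup>+ x. ennreal (px x) \<partial>MX) = 1"
    and py_meas: "(\<lambda>(x, a, y). py x a y) \<in> borel_measurable (MX \<Otimes>\<^sub>M (count_space UNIV \<Otimes>\<^sub>M lborel))"
    and py_nonneg: "\<forall>x\<in>space MX. \<forall>a y. py x a y \<ge> 0"
    and py_norm: "\<forall>x\<in>space MX. \<forall>a. (\<integral>\<^sup>+ y. ennreal (py x a y) \<partial>lborel) = 1"
    and pib_meas: "\<forall>a. pib a \<in> borel_measurable MX"
    and pib_pos: "\<forall>x\<in>space MX. \<forall>a. pib a x > 0"
    and pib_sum: "\<forall>x\<in>space MX. pib True x + pib False x = 1"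
    and second_moment: "integrable (sample_measure MX px py pib)
                          (\<lambda>(x, a, y). (rho_ATE pib a x * y)\<^sup>2)"
    and n_pos: "n \<ge> 1"
  shows
    "prob_space.variance (PiM {..<n} (\<lambda>_. sample_measure MX px py pib)) (ATE_MR n MX px py pib)
       \<le> prob_space.variance (PiM {..<n} (\<lambda>_. sample_measure MX px py pib)) (ATE_IPW n pib)
     \<and> prob_space.variance (PiM {..<n} (\<lambda>_. sample_measure MX px py pib)) (ATE_IPW n pib)
       - prob_space.variance (PiM {..<n} (\<lambda>_. sample_measure MX px py pib)) (ATE_MR n MX px py pib)
       = (1 / real n) * prob_space.expectation (sample_measure MX px py pib)
           (\<lambda>\<omega>. cond_var (sample_measure MX px py pib) (sigma_Y (sample_measure MX px py pib))
                    (\<lambda>(x, a, y). rho_ATE pib a x) \<omega> * (snd (snd \<omega>))\<^sup>2)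
     \<and> prob_space.expectation (sample_measure MX px py pib)
           (\<lambda>\<omega>. cond_var (sample_measure MX px py pib) (sigma_Y (sample_measure MX px py pib))
                    (\<lambda>(x, a, y). rho_ATE pib a x) \<omega> * (snd (snd \<omega>))\<^sup>2) \<ge> 0"
proof -
  interpret binary_treatment_model MX px py pib
    using sf px_meas px_nonneg px_norm py_meas py_nonneg py_norm pib_meas pib_pos pib_sum
    by (simp add: binary_treatment_model_def binary_treatment_model_axioms_def)
  interpret SM: prob_space SM by (rule prob_space_SM)
  define R :: "'x \<times> bool \<times> real \<Rightarrow> real" where "R = (\<lambda>(x, a, y). rho_ATE pib a x)"
  define W :: "'x \<times> bool \<times> real \<Rightarrow> real" where "W = (\<lambda>\<omega>. w_ATE MX px py pib (snd (snd \<omega>)))"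
  have R_meas: "R \<in> borel_measurable SM" and W_meas: "W \<in> borel_measurable SM"
    unfolding R_def W_def using rho_ATE_measurable w_ATE_measurable by measurable
  have RY2: "integrable SM (\<lambda>\<omega>. (R \<omega> * snd (snd \<omega>))\<^sup>2)"
    using second_moment by (simp add: R_def case_prod_beta')
  have "AE \<omega> in SM. real_cond_exp SM (sigma_Y SM) R \<omega> = W \<omega>"
    unfolding R_def W_def by (rule cond_exp_rho_ATE)
  note reduction = SM.variance_reduction_cond_exp[OF subalgebra_sigma_Y R_meas measurable_sigma_Y W_meas RY2 this]
  have "ATE_IPW n pib = (\<lambda>s. (1 / real n) * (\<Sum>i<n. R (s i) * snd (snd (s i))))"
    "ATE_MR n MX px py pib = (\<lambda>s. (1 / real n) * (\<Sum>i<n. W (s i) * snd (snd (s i))))"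
    by (simp_all add: ATE_IPW_def ATE_MR_def R_def W_def case_prod_beta' fun_eq_iff)
  then have variances:
    "prob_space.variance (PiM {..<n} (\<lambda>_. SM)) (ATE_IPW n pib) = SM.variance (\<lambda>\<omega>. R \<omega> * snd (snd \<omega>)) / n"
    "prob_space.variance (PiM {..<n} (\<lambda>_. SM)) (ATE_MR n MX px py pib) = SM.variance (\<lambda>\<omega>. W \<omega> * snd (snd \<omega>)) / n"
    using variance_sample_mean[OF prob_space_SM _ RY2] variance_sample_mean[OF prob_space_SM _ reduction(1)]
      R_meas W_meas by simp_all
  show ?thesis
    unfolding R_def[symmetric] variances using reduction(2,3) n_pos
    by (simp add: diff_divide_distrib[symmetric] divide_right_mono)
qed

end
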